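(* Let $\mathcal{G}$ be a connected graph on which the SBCM is run, and suppose its node set can be partitioned into sets $I$ and $J$ such that (1) $J\subseteq\mathcal{P}$ (i.e., $J$ contains no zealots), and (2) there is a single node $i\in I$ such that every path from any node $j\in J$ to a zealot traverses $i$. Then at any steady state $\mathbf{x}$ of the SBCM, $x_j=x_i$ for all $j\in J$.
   Context: Let $\mathcal{G}$ be a finite undirected unweighted graph without self-loops, with node set $\mathcal{N}$, adjacency $i\sim j$, partitioned into zealots $\mathcal{Z}$ and persuadable nodes $\mathcal{P}=\mathcal{N}\setminus\mathcal{Z}$. For $\gamma,\delta\ge0$, $w(x_i,x_j)=\frac{1}{1+e^{\gamma(x_i-x_j)^2-\gamma\delta}}$ if $i\sim j$ and $0$ otherwise. The SBCM is $\frac{dx_i}{dt}=f_i(\mathbf{x})=\frac{\sum_j w(x_i,x_j)(x_j-x_i)}{\sum_j w(x_i,x_j)}$ for $i\in\mathcal{P}$ and $\frac{dx_i}{dt}=0$ for $i\in\mathcal{Z}$. A steady state is $\mathbf{x}$ with $f_i(\mathbf{x})=0$ for all $i$. *)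

theory Defs
  imports Complex_Main
begin

definition simple_graph :: "'a set \<Rightarrow> ('a \<Rightarrow> 'a \<Rightarrow> bool) \<Rightarrow> bool" where
  "simple_graph N E \<longleftrightarrow> finite N \<and> (\<forall>u v. E u v \<longrightarrow> u \<in> N \<and> v \<in> N)
     \<and> (\<forall>u v. E u v \<longrightarrow> E v u) \<and> (\<forall>u. \<not> E u u)"

definition is_path :: "'a set \<Rightarrow> ('a \<Rightarrow> 'a \<Rightarrow> bool) \<Rightarrow> 'a \<Rightarrow> 'a \<Rightarrow> 'a list \<Rightarrow> bool" where
  "is_path N E u v p \<longleftrightarrow> p \<noteq> [] \<and> hd p = u \<and> last p = v \<and> set p \<subseteq> N
     \<and> (\<forall>k. k + 1 < length p \<longrightarrow> E (p ! k) (p ! (k + 1)))"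

definition graph_connected :: "'a set \<Rightarrow> ('a \<Rightarrow> 'a \<Rightarrow> bool) \<Rightarrow> bool" where
  "graph_connected N E \<longleftrightarrow> (\<forall>u\<in>N. \<forall>v\<in>N. \<exists>p. is_path N E u v p)"

definition sbcm_w :: "real \<Rightarrow> real \<Rightarrow> real \<Rightarrow> real \<Rightarrow> real" where
  "sbcm_w \<gamma> \<delta> a b = 1 / (1 + exp (\<gamma> * (a - b)^2 - \<gamma> * \<delta>))"

definition sbcm_f :: "'a set \<Rightarrow> ('a \<Rightarrow> 'a \<Rightarrow> bool) \<Rightarrow> 'a set \<Rightarrow> real \<Rightarrow> real \<Rightarrow> ('a \<Rightarrow> real) \<Rightarrow> 'a \<Rightarrow> real" where
  "sbcm_f N E Z \<gamma> \<delta> x i =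
     (if i \<in> Z then 0
      else (\<Sum>j\<in>N. (if E i j then sbcm_w \<gamma> \<delta> (x i) (x j) else 0) * (x j - x i))
           / (\<Sum>j\<in>N. (if E i j then sbcm_w \<gamma> \<delta> (x i) (x j) else 0)))"

definition sbcm_steady_state :: "'a set \<Rightarrow> ('a \<Rightarrow> 'a \<Rightarrow> bool) \<Rightarrow> 'a set \<Rightarrow> real \<Rightarrow> real \<Rightarrow> ('a \<Rightarrow> real) \<Rightarrow> bool" where
  "sbcm_steady_state N E Z \<gamma> \<delta> x \<longleftrightarrow> (\<forall>i\<in>N. sbcm_f N E Z \<gamma> \<delta> x i = 0)"

end

theory Submission
  imports Defs
begin

text \<open>Let C be the set of nodes reachable from J by paths avoiding i. By the cut hypothesis
  C contains no zealot, so at a steady state every node of C is a weighted average of its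
  neighbours with strictly positive weights, and every neighbour of a node of C lies in C or is i.
  If the maximum of x over C exceeded x i, the set where it is attained would be closed under
  adjacency, contradicting the existence of a path to i. Applying this to x and -x gives
  x = x i on C, which contains J.\<close>

lemma is_path_last_in_closed:
  assumes "is_path N E u v p" "u \<in> S" "\<forall>a\<in>S. \<forall>b. E a b \<longrightarrow> b \<in> S"
  shows "v \<in> S"
proof -
  have P: "p \<noteq> []" "hd p = u" "last p = v"
    "\<forall>k. k + 1 < length p \<longrightarrow> E (p ! k) (p ! (k + 1))"
    using assms(1) unfolding is_path_def by auto
  have "p ! k \<in> S" if "k < length p" for k
    using that
  proof (induction k)
    case 0
    then show ?case using P assms(2) by (simp add: hd_conv_nth)
  next
    case (Suc k)
    then show ?case using P assms(3) by (metis Suc_eq_plus1 Suc_lessD)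
  qed
  then show ?thesis using P by (metis last_conv_nth length_greater_0_conv diff_less zero_less_one)
qed

lemma is_path_snoc:
  assumes "is_path N E u c p" "E c v" "v \<in> N"
  shows "is_path N E u v (p @ [v])"
proof -
  have P: "p \<noteq> []" "hd p = u" "last p = c" "set p \<subseteq> N"
    "\<forall>k. k + 1 < length p \<longrightarrow> E (p ! k) (p ! (k + 1))"
    using assms(1) unfolding is_path_def by auto
  have "E ((p @ [v]) ! k) ((p @ [v]) ! (k + 1))" if k: "k + 1 < length (p @ [v])" for k
  proof (cases "k + 1 < length p")
    case True
    then show ?thesis using P by (simp add: nth_append)
  next
    case False
    then have "k = length p - 1" using k by simp
    then show ?thesis using P assms(2) False k by (simp add: nth_append last_conv_nth)
  qed
  then show ?thesis using P assms unfolding is_path_def by auto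
qed

definition reachable_avoiding :: "'a set \<Rightarrow> ('a \<Rightarrow> 'a \<Rightarrow> bool) \<Rightarrow> 'a set \<Rightarrow> 'a \<Rightarrow> 'a set" where
  "reachable_avoiding N E J i = {v. \<exists>j\<in>J. \<exists>p. is_path N E j v p \<and> i \<notin> set p}"

lemma reachable_avoiding_subset: "reachable_avoiding N E J i \<subseteq> N"
  unfolding reachable_avoiding_def is_path_def by (auto dest!: last_in_set)

lemma avoided_not_in_reachable_avoiding: "i \<notin> reachable_avoiding N E J i"
  unfolding reachable_avoiding_def is_path_def by (auto dest!: last_in_set)

lemma subset_reachable_avoiding:
  assumes "J \<subseteq> N" "i \<notin> J"
  shows "J \<subseteq> reachable_avoiding N E J i"
proof
  fix j assume j: "j \<in> J"
  then have "is_path N E j j [j]" "i \<notin> set [j]"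
    using assms unfolding is_path_def by auto
  then show "j \<in> reachable_avoiding N E J i"
    unfolding reachable_avoiding_def using j by blast
qed

lemma reachable_avoiding_closed:
  assumes "\<forall>u v. E u v \<longrightarrow> v \<in> N"
  shows "\<forall>c\<in>reachable_avoiding N E J i. \<forall>v. E c v \<longrightarrow> v \<in> reachable_avoiding N E J i \<or> v = i"
proof (intro ballI allI impI disjCI)
  fix c v assume c: "c \<in> reachable_avoiding N E J i" and cv: "E c v" and vi: "v \<noteq> i"
  obtain j p where jp: "j \<in> J" "is_path N E j c p" "i \<notin> set p"
    using c unfolding reachable_avoiding_def by auto
  have "is_path N E j v (p @ [v])" using is_path_snoc[OF jp(2) cv] assms cv by blast
  moreover have "i \<notin> set (p @ [v])" using jp(3) vi by simp
  ultimately show "v \<in> reachable_avoiding N E J i"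
    unfolding reachable_avoiding_def using jp(1) by blast
qed

definition harmonic_at ::
    "'a set \<Rightarrow> ('a \<Rightarrow> 'a \<Rightarrow> bool) \<Rightarrow> ('a \<Rightarrow> 'a \<Rightarrow> real) \<Rightarrow> ('a \<Rightarrow> real) \<Rightarrow> 'a \<Rightarrow> bool" where
  "harmonic_at N E W y c \<longleftrightarrow> (\<Sum>v\<in>N. (if E c v then W c v else 0) * (y v - y c)) = 0"

lemma harmonic_at_uminus: "harmonic_at N E W (\<lambda>u. - y u) c \<longleftrightarrow> harmonic_at N E W y c"
proof -
  have "(\<Sum>v\<in>N. (if E c v then W c v else 0) * (- y v - - y c))
      = - (\<Sum>v\<in>N. (if E c v then W c v else 0) * (y v - y c))"
    by (simp add: sum_negf[symmetric] algebra_simps)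
  then show ?thesis unfolding harmonic_at_def by simp
qed

lemma harmonic_at_local_max:
  assumes fin: "finite N" and EN: "\<forall>v. E a v \<longrightarrow> v \<in> N"
    and Wpos: "\<forall>v. E a v \<longrightarrow> W a v > 0"
    and harm: "harmonic_at N E W y a"
    and le_a: "\<forall>v. E a v \<longrightarrow> y v \<le> y a"
    and ab: "E a b"
  shows "y b = y a"
proof -
  let ?t = "\<lambda>v. - ((if E a v then W a v else 0) * (y v - y a))"
  have nonneg: "\<forall>v\<in>N. ?t v \<ge> 0"
    using Wpos le_a by (simp add: mult_nonneg_nonpos less_imp_le)
  have "sum ?t N = 0"
    using harm unfolding harmonic_at_def by (simp add: sum_negf)
  then have "\<forall>v\<in>N. ?t v = 0"
    using nonneg fin by (subst (asm) sum_nonneg_eq_0_iff) auto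
  then have "W a b * (y b - y a) = 0" using ab EN by force
  moreover have "W a b > 0" using Wpos ab by blast
  ultimately show ?thesis by simp
qed

lemma harmonic_max_principle:
  assumes fin: "finite N" and EN: "\<forall>u v. E u v \<longrightarrow> v \<in> N"
    and Wpos: "\<forall>u v. E u v \<longrightarrow> W u v > 0"
    and CN: "C \<subseteq> N" and iC: "i \<notin> C"
    and closed: "\<forall>c\<in>C. \<forall>v. E c v \<longrightarrow> v \<in> C \<or> v = i"
    and paths: "\<forall>c\<in>C. \<exists>p. is_path N E c i p"
    and harm: "\<forall>c\<in>C. harmonic_at N E W y c"
  shows "\<forall>c\<in>C. y c \<le> y i"
proof (rule ccontr)
  assume "\<not> (\<forall>c\<in>C. y c \<le> y i)"
  then obtain c0 where c0: "c0 \<in> C" "y c0 > y i" by auto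
  have finC: "finite C" using fin CN finite_subset by blast
  define M where "M = Max (y ` C)"
  have leM: "\<And>c. c \<in> C \<Longrightarrow> y c \<le> M" unfolding M_def using finC by simp
  have "M \<in> y ` C" unfolding M_def using finC c0 by (intro Max_in) auto
  then obtain s where s: "s \<in> C" "y s = M" by auto
  have iM: "y i < M" using leM[OF c0(1)] c0 by simp
  define S where "S = {c\<in>C. y c = M}"
  have S_closed: "\<forall>a\<in>S. \<forall>b. E a b \<longrightarrow> b \<in> S"
  proof (intro ballI allI impI)
    fix a b assume a: "a \<in> S" and ab: "E a b"
    have aC: "a \<in> C" and ya: "y a = M" using a S_def by auto
    have le_a: "\<forall>v. E a v \<longrightarrow> y v \<le> y a" using closed aC leM iM ya by fastforce
    have "y b = y a"
      by (rule harmonic_at_local_max[of N E a W y b, OF fin]) (use EN Wpos harm aC le_a ab in auto)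
    then have "y b = M" using ya by simp
    moreover have "b \<in> C" using closed aC ab iM \<open>y b = M\<close> by fastforce
    ultimately show "b \<in> S" using S_def by simp
  qed
  obtain p where "is_path N E s i p" using paths s by blast
  moreover have "s \<in> S" using s S_def by simp
  ultimately have "i \<in> S" using S_closed by (rule is_path_last_in_closed)
  then show False using iC S_def by simp
qed

lemma harmonic_eq_boundary:
  assumes "finite N" "\<forall>u v. E u v \<longrightarrow> v \<in> N" "\<forall>u v. E u v \<longrightarrow> W u v > 0"
    "C \<subseteq> N" "i \<notin> C" "\<forall>c\<in>C. \<forall>v. E c v \<longrightarrow> v \<in> C \<or> v = i"
    "\<forall>c\<in>C. \<exists>p. is_path N E c i p"
    and harm: "\<forall>c\<in>C. harmonic_at N E W y c"
  shows "\<forall>c\<in>C. y c = y i"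
proof -
  have "\<forall>c\<in>C. y c \<le> y i"
    using harm by (rule harmonic_max_principle[OF assms(1-7)])
  moreover have "\<forall>c\<in>C. - y c \<le> - y i"
    using harm harmonic_max_principle[OF assms(1-7), where y = "\<lambda>u. - y u"]
    by (simp add: harmonic_at_uminus)
  ultimately show ?thesis by fastforce
qed

lemma sbcm_w_pos: "sbcm_w \<gamma> \<delta> a b > 0"
  unfolding sbcm_w_def by (simp add: add_pos_pos)

lemma sbcm_steady_state_harmonic:
  assumes "finite N" "sbcm_steady_state N E Z \<gamma> \<delta> x" "c \<in> N" "c \<notin> Z"
  shows "harmonic_at N E (\<lambda>u v. sbcm_w \<gamma> \<delta> (x u) (x v)) x c"
proof -
  let ?w = "\<lambda>v. if E c v then sbcm_w \<gamma> \<delta> (x c) (x v) else 0"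
  have drift: "(\<Sum>v\<in>N. ?w v * (x v - x c)) / sum ?w N = 0"
    using assms unfolding sbcm_steady_state_def sbcm_f_def by auto
  show ?thesis
  proof (cases "sum ?w N = 0")
    case True
    \<comment> \<open>c is isolated: sbcm_f is 0 / 0 = 0, and the weighted sum is empty as well\<close>
    then have "\<forall>v\<in>N. ?w v = 0"
      using assms(1) sbcm_w_pos by (subst (asm) sum_nonneg_eq_0_iff) (auto simp: less_imp_le)
    then show ?thesis unfolding harmonic_at_def by simp
  next
    case False
    then show ?thesis using drift unfolding harmonic_at_def by simp
  qed
qed

theorem theorem4:
  fixes N :: "'a set" and E :: "'a \<Rightarrow> 'a \<Rightarrow> bool" and Z I J :: "'a set"
    and \<gamma> \<delta> :: real and x :: "'a \<Rightarrow> real" and i :: 'a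
  assumes graph: "simple_graph N E"
    and conn: "graph_connected N E"
    and Z_sub: "Z \<subseteq> N"
    and gamma: "\<gamma> \<ge> 0" and delta: "\<delta> \<ge> 0"
    and part: "I \<union> J = N" "I \<inter> J = {}"
    and J_pers: "J \<subseteq> N - Z"
    and i_in: "i \<in> I"
    and cut: "\<forall>j\<in>J. \<forall>z\<in>Z. \<forall>p. is_path N E j z p \<longrightarrow> i \<in> set p"
    and ss: "sbcm_steady_state N E Z \<gamma> \<delta> x"
  shows "\<forall>j\<in>J. x j = x i"
proof -
  have fin: "finite N" and EN: "\<forall>u v. E u v \<longrightarrow> v \<in> N"
    using graph unfolding simple_graph_def by auto
  have iN: "i \<in> N" and JN: "J \<subseteq> N" and iJ: "i \<notin> J" using part i_in by auto
  let ?C = "reachable_avoiding N E J i"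
  have CN: "?C \<subseteq> N" by (rule reachable_avoiding_subset)
  have JC: "J \<subseteq> ?C" using JN iJ by (rule subset_reachable_avoiding)
  have CZ: "?C \<inter> Z = {}" using cut unfolding reachable_avoiding_def by blast
  have closed: "\<forall>c\<in>?C. \<forall>v. E c v \<longrightarrow> v \<in> ?C \<or> v = i"
    using EN by (rule reachable_avoiding_closed)
  have paths: "\<forall>c\<in>?C. \<exists>p. is_path N E c i p"
    using conn CN iN unfolding graph_connected_def by blast
  have Wpos: "\<forall>u v. E u v \<longrightarrow> sbcm_w \<gamma> \<delta> (x u) (x v) > 0" using sbcm_w_pos by blast
  have "\<forall>c\<in>?C. harmonic_at N E (\<lambda>u v. sbcm_w \<gamma> \<delta> (x u) (x v)) x c"
    using sbcm_steady_state_harmonic[OF fin ss] CN CZ by blast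
  then have "\<forall>c\<in>?C. x c = x i"
    by (rule harmonic_eq_boundary[OF fin EN Wpos CN avoided_not_in_reachable_avoiding closed paths])
  then show ?thesis using JC by blast
qed

end
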